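(* Let $\mathbf{x}_t$ solve $\mathrm d\mathbf{x}_t=a(\mathbf{x}_t)\,\mathrm dt+b(\mathbf{x}_t)\,\mathrm d\mathbf{w}_t$ on $\mathbb R^d$ with $\mathbf{x}_0\sim p_{\mathrm{data}}$, let $q_t$ be its transition density, and let $U_s(\mathbf{y}):=-\log\int q_s(\mathbf{y}\mid\mathbf{x})\exp(-U(\mathbf{x}))\,\mathrm d\mathbf{x}$ (with $U_0=U$). Then $$\mathrm{ED}_{q_t}(p_{\mathrm{data}},U)=-\mathbb E\Big[\int_0^t\mathrm dU_s(\mathbf{x}_s)\Big],$$ where $\int_0^t\mathrm dU_s(\mathbf{x}_s)$ is the Itô integral, i.e. $U_t(\mathbf{x}_t)=U_0(\mathbf{x}_0)+\int_0^t\mathrm dU_s(\mathbf{x}_s)$, and the expectation is over the process $(\mathbf{x}_s)_{0\le s\le t}$.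
   Context: $\mathrm{ED}_q(p_{\mathrm{data}},U):=\mathbb E_{p_{\mathrm{data}}(\mathbf{x})}[U(\mathbf{x})]-\mathbb E_{p_{\mathrm{data}}(\mathbf{x})}\mathbb E_{q(\mathbf{y}\mid\mathbf{x})}[U_q(\mathbf{y})]$ with $U_q(\mathbf{y}):=-\log\int q(\mathbf{y}\mid\mathbf{x})\exp(-U(\mathbf{x}))\,\mathrm d\mathbf{x}$. *)

theory Defs
  imports "HOL-Probability.Probability"
begin

text \<open>Conditional densities are written as functions of two arguments:
  q y x stands for q(y | x). All integrals are Lebesgue integrals w.r.t. lborel
  on a Euclidean space (playing the role of R^d).\<close>

definition U_q :: "('a::euclidean_space \<Rightarrow> 'a \<Rightarrow> real) \<Rightarrow> ('a \<Rightarrow> real) \<Rightarrow> 'a \<Rightarrow> real" where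
  "U_q q U y = - ln (\<integral>x. q y x * exp (- U x) \<partial>lborel)"

definition ED :: "('a::euclidean_space \<Rightarrow> 'a \<Rightarrow> real) \<Rightarrow> ('a \<Rightarrow> real) \<Rightarrow> ('a \<Rightarrow> real) \<Rightarrow> real" where
  "ED q p U = (\<integral>x. p x * U x \<partial>lborel)
              - (\<integral>x. p x * (\<integral>y. q y x * U_q q U y \<partial>lborel) \<partial>lborel)"

definition U_s :: "(real \<Rightarrow> 'a::euclidean_space \<Rightarrow> 'a \<Rightarrow> real) \<Rightarrow> ('a \<Rightarrow> real) \<Rightarrow> real \<Rightarrow> 'a \<Rightarrow> real" where
  "U_s q U s = (if s = 0 then U else U_q (q s) U)"

text \<open>The Ito integral of dU_s(x_s) over [0,t], characterised as in the paper by
  U_t(x_t) = U_0(x_0) + integral.\<close>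
definition ito_dU :: "(real \<Rightarrow> 'a::euclidean_space \<Rightarrow> 'a \<Rightarrow> real) \<Rightarrow> ('a \<Rightarrow> real)
    \<Rightarrow> (real \<Rightarrow> 'w \<Rightarrow> 'a) \<Rightarrow> real \<Rightarrow> 'w \<Rightarrow> real" where
  "ito_dU q U X t \<omega> = U_s q U t (X t \<omega>) - U_s q U 0 (X 0 \<omega>)"

end

theory Submission
  imports Defs
begin

text \<open>With U_0 = U and U_t = U_{q_t}, the Ito integral telescopes to
  U_{q_t}(x_t) - U(x_0). The pair (x_0, x_t) has joint density p_data(x) q_t(y | x), so
  disintegrating along x_0 gives E U(x_0) = E_p U (as q_t(- | x) is a probability density)
  and E U_{q_t}(x_t) = E_p E_{q_t} U_{q_t}: these are the two terms of ED.\<close>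

lemma integral_distributed_pair_kernel:
  fixes p :: "'a \<Rightarrow> real" and k :: "'b \<Rightarrow> 'a \<Rightarrow> real" and h :: "'a \<times> 'b \<Rightarrow> real"
  assumes "pair_sigma_finite N K"
    and dist: "distributed M (N \<Otimes>\<^sub>M K) (\<lambda>\<omega>. (Y \<omega>, Z \<omega>)) (\<lambda>(x, y). ennreal (p x * k y x))"
    and nonneg: "\<And>x y. 0 \<le> p x * k y x"
    and h: "h \<in> borel_measurable (N \<Otimes>\<^sub>M K)"
    and int: "integrable M (\<lambda>\<omega>. h (Y \<omega>, Z \<omega>))"
  shows "(\<integral>\<omega>. h (Y \<omega>, Z \<omega>) \<partial>M) = (\<integral>x. p x * (\<integral>y. k y x * h (x, y) \<partial>K) \<partial>N)"
proof -
  define f where "f = (\<lambda>(x, y). p x * k y x)"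
  have dist_f: "distributed M (N \<Otimes>\<^sub>M K) (\<lambda>\<omega>. (Y \<omega>, Z \<omega>)) (\<lambda>z. ennreal (f z))"
    using dist by (simp add: f_def case_prod_beta')
  have f_nonneg: "\<And>z. 0 \<le> f z"
    using nonneg by (simp add: f_def split: prod.split)
  have int_pair: "integrable (N \<Otimes>\<^sub>M K) (\<lambda>z. f z * h z)"
    using distributed_integrable[OF dist_f h] f_nonneg int by simp
  have "(\<integral>\<omega>. h (Y \<omega>, Z \<omega>) \<partial>M) = (\<integral>z. f z * h z \<partial>(N \<Otimes>\<^sub>M K))"
    using distributed_integral[OF dist_f h] f_nonneg by simp
  also have "\<dots> = (\<integral>x. (\<integral>y. f (x, y) * h (x, y) \<partial>K) \<partial>N)"
    using pair_sigma_finite.integral_fst'[OF assms(1) int_pair] by simp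
  also have "\<dots> = (\<integral>x. p x * (\<integral>y. k y x * h (x, y) \<partial>K) \<partial>N)"
    by (simp add: f_def mult.assoc)
  finally show ?thesis .
qed

lemma integral_distributed_pair_kernel_fst:
  fixes p :: "'a \<Rightarrow> real" and k :: "'b \<Rightarrow> 'a \<Rightarrow> real" and g :: "'a \<Rightarrow> real"
  assumes "pair_sigma_finite N K"
    and "distributed M (N \<Otimes>\<^sub>M K) (\<lambda>\<omega>. (Y \<omega>, Z \<omega>)) (\<lambda>(x, y). ennreal (p x * k y x))"
    and "\<And>x y. 0 \<le> p x * k y x"
    and kernel_normalized: "\<And>x. (\<integral>y. k y x \<partial>K) = 1"
    and "g \<in> borel_measurable N"
    and "integrable M (\<lambda>\<omega>. g (Y \<omega>))"
  shows "(\<integral>\<omega>. g (Y \<omega>) \<partial>M) = (\<integral>x. p x * g x \<partial>N)"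
proof -
  have "(\<lambda>z. g (fst z)) \<in> borel_measurable (N \<Otimes>\<^sub>M K)"
    using assms(5) by measurable
  from integral_distributed_pair_kernel[OF assms(1-3) this] assms(6)
  have "(\<integral>\<omega>. g (Y \<omega>) \<partial>M) = (\<integral>x. p x * (\<integral>y. k y x * g x \<partial>K) \<partial>N)"
    by simp
  then show ?thesis
    using kernel_normalized by simp
qed

lemma integral_distributed_pair_kernel_snd:
  fixes p :: "'a \<Rightarrow> real" and k :: "'b \<Rightarrow> 'a \<Rightarrow> real" and g :: "'b \<Rightarrow> real"
  assumes "pair_sigma_finite N K"
    and "distributed M (N \<Otimes>\<^sub>M K) (\<lambda>\<omega>. (Y \<omega>, Z \<omega>)) (\<lambda>(x, y). ennreal (p x * k y x))"
    and "\<And>x y. 0 \<le> p x * k y x"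
    and "g \<in> borel_measurable K"
    and "integrable M (\<lambda>\<omega>. g (Z \<omega>))"
  shows "(\<integral>\<omega>. g (Z \<omega>) \<partial>M) = (\<integral>x. p x * (\<integral>y. k y x * g y \<partial>K) \<partial>N)"
proof -
  have "(\<lambda>z. g (snd z)) \<in> borel_measurable (N \<Otimes>\<^sub>M K)"
    using assms(4) by measurable
  from integral_distributed_pair_kernel[OF assms(1-3) this] assms(5) show ?thesis
    by simp
qed

lemma ED_eq_expectation_diff:
  fixes p :: "'a::euclidean_space \<Rightarrow> real" and q :: "'a \<Rightarrow> 'a \<Rightarrow> real"
  assumes dist: "distributed M (lborel \<Otimes>\<^sub>M lborel) (\<lambda>\<omega>. (Y \<omega>, Z \<omega>)) (\<lambda>(x, y). ennreal (p x * q y x))"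
    and nonneg: "\<And>x y. 0 \<le> p x * q y x"
    and normalized: "\<And>x. (\<integral>y. q y x \<partial>lborel) = 1"
    and "U \<in> borel_measurable borel" "integrable M (\<lambda>\<omega>. U (Y \<omega>))"
    and "U_q q U \<in> borel_measurable borel" "integrable M (\<lambda>\<omega>. U_q q U (Z \<omega>))"
  shows "ED q p U = (\<integral>\<omega>. U (Y \<omega>) \<partial>M) - (\<integral>\<omega>. U_q q U (Z \<omega>) \<partial>M)"
proof -
  have lborel_pair: "pair_sigma_finite lborel lborel"
    by unfold_locales
  show ?thesis
    unfolding ED_def
    using integral_distributed_pair_kernel_fst[OF lborel_pair dist nonneg normalized]
      integral_distributed_pair_kernel_snd[OF lborel_pair dist nonneg] assms(4-)
    by simp
qed

theorem proposition4:
  fixes M :: "'w measure"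
    and X :: "real \<Rightarrow> 'w \<Rightarrow> 'a::euclidean_space"
    and p_data :: "'a \<Rightarrow> real"
    and q :: "real \<Rightarrow> 'a \<Rightarrow> 'a \<Rightarrow> real"
    and U :: "'a \<Rightarrow> real"
    and t :: real
  assumes "prob_space M"
    and "\<And>s. 0 \<le> s \<Longrightarrow> X s \<in> borel_measurable M"
    and "t > 0"
    and "\<And>x. p_data x \<ge> 0"
    and "\<And>s x y. 0 < s \<Longrightarrow> q s y x \<ge> 0"
    and "\<And>s x. 0 < s \<Longrightarrow> (\<integral>y. q s y x \<partial>lborel) = 1"
    and "U \<in> borel_measurable borel"
    and "distributed M (lborel \<Otimes>\<^sub>M lborel) (\<lambda>\<omega>. (X 0 \<omega>, X t \<omega>))
           (\<lambda>(x, y). ennreal (p_data x * q t y x))"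
    and "integrable M (\<lambda>\<omega>. U (X 0 \<omega>))"
    and "U_s q U t \<in> borel_measurable borel"
    and "integrable M (\<lambda>\<omega>. U_s q U t (X t \<omega>))"
  shows "ED (q t) p_data U = - (\<integral>\<omega>. ito_dU q U X t \<omega> \<partial>M)"
proof -
  have U_t: "U_s q U t = U_q (q t) U"
    using \<open>t > 0\<close> by (simp add: U_s_def)
  have U_0: "U_s q U 0 = U"
    by (simp add: U_s_def)
  have "ED (q t) p_data U = (\<integral>\<omega>. U (X 0 \<omega>) \<partial>M) - (\<integral>\<omega>. U_q (q t) U (X t \<omega>) \<partial>M)"
    using ED_eq_expectation_diff[OF assms(8)] assms(3-7,9-11) U_t by simp
  also have "\<dots> = - (\<integral>\<omega>. U_q (q t) U (X t \<omega>) - U (X 0 \<omega>) \<partial>M)"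
    using assms(9,11) U_t by simp
  also have "\<dots> = - (\<integral>\<omega>. ito_dU q U X t \<omega> \<partial>M)"
    by (simp add: ito_dU_def U_t U_0)
  finally show ?thesis .
qed

end
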